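(* Let $S=\{x_1,\dots,x_N\}\subset\mathbb{R}^n$ be a two-distance tight frame for $\mathbb{R}^n$ with inner products $a,b$, $a^2\neq b^2$. Let $\Gamma_1$ be the graph on vertex set $\{1,\dots,N\}$ in which distinct $i,j$ are adjacent iff $\langle x_i,x_j\rangle=a$, and $\Gamma_2$ its complement (adjacency iff $\langle x_i,x_j\rangle=b$). Then $\Gamma_1$ and $\Gamma_2$ are strongly regular graphs: they are regular, any two adjacent vertices have the same number of common neighbours, and any two nonadjacent vertices have the same number of common neighbours.
   Context: A two-distance tight frame for $\mathbb{R}^n$ is a finite set of unit vectors $\{x_1,\dots,x_N\}\subset\mathbb{R}^n$ such that there are two real numbers $a\neq b$ with $\langle x_i,x_j\rangle\in\{a,b\}$ for all $i\neq j$, and $\sum_{i=1}^N\langle x,x_i\rangle^2=\frac{N}{n}\|x\|^2$ for all $x\in\mathbb{R}^n$. *)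

theory Defs
  imports "HOL-Analysis.Analysis"
begin

definition two_distance_tight_frame :: "(real ^ 'n) set \<Rightarrow> real \<Rightarrow> real \<Rightarrow> bool" where
  "two_distance_tight_frame S a b \<longleftrightarrow>
     finite S \<and> a \<noteq> b \<and>
     (\<forall>x\<in>S. norm x = 1) \<and>
     (\<forall>x\<in>S. \<forall>y\<in>S. x \<noteq> y \<longrightarrow> x \<bullet> y = a \<or> x \<bullet> y = b) \<and>
     (\<forall>x::real^'n. (\<Sum>v\<in>S. (x \<bullet> v)\<^sup>2) = real (card S) / real CARD('n) * (norm x)\<^sup>2)"

definition strongly_regular :: "'a set \<Rightarrow> ('a \<Rightarrow> 'a \<Rightarrow> bool) \<Rightarrow> bool" where
  "strongly_regular V E \<longleftrightarrow>
     (\<exists>k::nat. \<forall>v\<in>V. card {w\<in>V. E v w} = k) \<and>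
     (\<exists>l::nat. \<forall>v\<in>V. \<forall>w\<in>V. v \<noteq> w \<and> E v w \<longrightarrow> card {u\<in>V. E v u \<and> E w u} = l) \<and>
     (\<exists>m::nat. \<forall>v\<in>V. \<forall>w\<in>V. v \<noteq> w \<and> \<not> E v w \<longrightarrow> card {u\<in>V. E v u \<and> E w u} = m)"

end

theory Submission
  imports Defs
begin

(* By polarization, tightness says that the Gram matrix G of the frame satisfies G^2 = c G with
   c = N/n. Writing G = (1 - b) I + b J + (a - b) A, where A is the adjacency matrix of Gamma_1, the
   diagonal entries of G^2 = c G give (a^2 - b^2) deg u = c - 1 - (N - 1) b^2, so Gamma_1 is regular
   because a^2 \<noteq> b^2. The off-diagonal entries then express the number of common neighbours of
   u \<noteq> w through the degree and <x_u, x_w> \<in> {a, b} alone. Exchanging a and b gives the same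
   for Gamma_2. *)

lemma tight_frame_polarization:
  fixes S :: "'a::real_inner set"
  assumes frame: "\<And>x. (\<Sum>v\<in>S. (x \<bullet> v)\<^sup>2) = c * (norm x)\<^sup>2"
  shows "(\<Sum>v\<in>S. (x \<bullet> v) * (y \<bullet> v)) = c * (x \<bullet> y)"
proof -
  have "4 * (\<Sum>v\<in>S. (x \<bullet> v) * (y \<bullet> v)) =
      (\<Sum>v\<in>S. ((x + y) \<bullet> v)\<^sup>2) - (\<Sum>v\<in>S. ((x - y) \<bullet> v)\<^sup>2)"
    by (simp add: sum_subtractf[symmetric] sum_distrib_left inner_add_left inner_diff_left
        power2_eq_square algebra_simps)
  also have "\<dots> = c * ((norm (x + y))\<^sup>2 - (norm (x - y))\<^sup>2)"
    by (simp add: frame right_diff_distrib)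
  also have "\<dots> = 4 * (c * (x \<bullet> y))"
    by (simp add: power2_norm_eq_inner inner_add inner_diff inner_commute algebra_simps)
  finally show ?thesis
    by simp
qed

lemma strongly_regularI:
  fixes k l m :: real
  assumes degree: "\<And>v. v \<in> V \<Longrightarrow> card {w\<in>V. E v w} = k"
    and adjacent: "\<And>v w. v \<in> V \<Longrightarrow> w \<in> V \<Longrightarrow> v \<noteq> w \<Longrightarrow> E v w \<Longrightarrow>
      card {u\<in>V. E v u \<and> E w u} = l"
    and nonadjacent: "\<And>v w. v \<in> V \<Longrightarrow> w \<in> V \<Longrightarrow> v \<noteq> w \<Longrightarrow> \<not> E v w \<Longrightarrow>
      card {u\<in>V. E v u \<and> E w u} = m"
  shows "strongly_regular V E"
proof -
  have nat_valued: "\<exists>n. \<forall>x. P x \<longrightarrow> f x = n"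
    if "\<And>x. P x \<Longrightarrow> real (f x) = r" for P and f :: "'b \<Rightarrow> nat" and r
    using that by (metis of_nat_eq_iff)
  show ?thesis
    unfolding strongly_regular_def
    using nat_valued[of "\<lambda>v. v \<in> V" "\<lambda>v. card {w\<in>V. E v w}", OF degree]
      nat_valued[of "\<lambda>(v, w). v \<in> V \<and> w \<in> V \<and> v \<noteq> w \<and> E v w"
        "\<lambda>(v, w). card {u\<in>V. E v u \<and> E w u}" l]
      nat_valued[of "\<lambda>(v, w). v \<in> V \<and> w \<in> V \<and> v \<noteq> w \<and> \<not> E v w"
        "\<lambda>(v, w). card {u\<in>V. E v u \<and> E w u}" m]
      adjacent nonadjacent
    by auto
qed

locale two_valued_gram =
  fixes V :: "'a set" and G :: "'a \<Rightarrow> 'a \<Rightarrow> real" and a b c :: real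
  assumes finite_V: "finite V"
    and gram_diag: "u \<in> V \<Longrightarrow> G u u = 1"
    and gram_sym: "u \<in> V \<Longrightarrow> v \<in> V \<Longrightarrow> G u v = G v u"
    and gram_two_valued: "u \<in> V \<Longrightarrow> v \<in> V \<Longrightarrow> u \<noteq> v \<Longrightarrow> G u v = a \<or> G u v = b"
    and gram_square: "u \<in> V \<Longrightarrow> w \<in> V \<Longrightarrow> (\<Sum>v\<in>V. G u v * G w v) = c * G u w"
begin

abbreviation adjacent :: "'a \<Rightarrow> 'a \<Rightarrow> bool" where
  "adjacent u v \<equiv> u \<noteq> v \<and> G u v = a"

lemma gram_decomposition:
  assumes "u \<in> V" "v \<in> V"
  shows "G u v = (1 - b) * of_bool (u = v) + b + (a - b) * of_bool (adjacent u v)"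
  using assms gram_diag gram_two_valued[of u v] by auto

lemma sum_gram_product:
  assumes u: "u \<in> V" and w: "w \<in> V"
  shows "(\<Sum>v\<in>V. G u v * G w v) =
      (1 - b)\<^sup>2 * of_bool (u = w) + 2 * b * (1 - b) + card V * b\<^sup>2
    + 2 * (1 - b) * (a - b) * of_bool (adjacent u w)
    + b * (a - b) * (real (card {v\<in>V. adjacent u v}) + real (card {v\<in>V. adjacent w v}))
    + (a - b)\<^sup>2 * card {v\<in>V. adjacent u v \<and> adjacent w v}"
  (is "_ = ?rhs")
proof -
  let ?d = "\<lambda>x v. of_bool (x = v) :: real" and ?A = "\<lambda>x v. of_bool (adjacent x v) :: real"
  have expand: "(p * x + b + q * y) * (p * x' + b + q * y') =
      p\<^sup>2 * (x * x') + b * p * x + b * p * x' + p * q * (x * y') + p * q * (x' * y)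
      + b\<^sup>2 + b * q * y + b * q * y' + q\<^sup>2 * (y * y')" for p q x y x' y' :: real
    by (simp add: power2_eq_square algebra_simps)
  have "(\<Sum>v\<in>V. G u v * G w v) =
      (\<Sum>v\<in>V. ((1 - b) * ?d u v + b + (a - b) * ?A u v)
               * ((1 - b) * ?d w v + b + (a - b) * ?A w v))"
    using arg_cong2[where f = "(*)", OF gram_decomposition[OF u] gram_decomposition[OF w]]
    by (intro sum.cong) simp_all
  also have "\<dots> = (1 - b)\<^sup>2 * (\<Sum>v\<in>V. ?d u v * ?d w v)
     + b * (1 - b) * (\<Sum>v\<in>V. ?d u v) + b * (1 - b) * (\<Sum>v\<in>V. ?d w v)
     + (1 - b) * (a - b) * (\<Sum>v\<in>V. ?d u v * ?A w v)
     + (1 - b) * (a - b) * (\<Sum>v\<in>V. ?d w v * ?A u v)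
     + card V * b\<^sup>2 + b * (a - b) * (\<Sum>v\<in>V. ?A u v) + b * (a - b) * (\<Sum>v\<in>V. ?A w v)
     + (a - b)\<^sup>2 * (\<Sum>v\<in>V. ?A u v * ?A w v)"
    by (simp only: expand sum.distrib sum_distrib_left[symmetric] sum_constant)
  also have "\<dots> = ?rhs"
  proof -
    have "(\<Sum>v\<in>V. ?d x v * f v) = f x" if "x \<in> V" for x and f :: "'a \<Rightarrow> real"
      using that finite_V by (simp add: eq_commute[of x])
    from this[of _ "\<lambda>_. 1"] this[OF u] this[OF w]
    have delta: "(\<Sum>v\<in>V. ?d u v) = 1" "(\<Sum>v\<in>V. ?d w v) = 1"
      "(\<Sum>v\<in>V. ?d u v * ?d w v) = ?d u w"
      "(\<Sum>v\<in>V. ?d u v * ?A w v) = ?A u w" "(\<Sum>v\<in>V. ?d w v * ?A u v) = ?A u w"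
      using u w gram_sym[OF u w] by auto
    have "(\<Sum>v\<in>V. ?A x v) = card {v\<in>V. adjacent x v}" for x
      using finite_V by (simp add: Int_def)
    moreover have "(\<Sum>v\<in>V. ?A u v * ?A w v) = card {v\<in>V. adjacent u v \<and> adjacent w v}"
      using finite_V by (simp add: of_bool_conj[symmetric] Int_def)
    ultimately show ?thesis
      by (simp only: delta) (simp add: algebra_simps)
  qed
  finally show ?thesis .
qed

lemma degree_eq:
  assumes "u \<in> V"
  shows "(a\<^sup>2 - b\<^sup>2) * card {v\<in>V. adjacent u v} = c - 1 - (real (card V) - 1) * b\<^sup>2"
  using sum_gram_product[OF assms assms] gram_square[OF assms assms] gram_diag[OF assms]
  by (simp add: power2_eq_square algebra_simps)

lemma common_neighbours_eq:
  assumes "u \<in> V" "w \<in> V" "u \<noteq> w"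
  shows "(a - b)\<^sup>2 * card {v\<in>V. adjacent u v \<and> adjacent w v} =
      c * G u w - 2 * b * (1 - b) - card V * b\<^sup>2 - 2 * (1 - b) * (a - b) * of_bool (G u w = a)
    - b * (a - b) * (real (card {v\<in>V. adjacent u v}) + real (card {v\<in>V. adjacent w v}))"
  using sum_gram_product[OF assms(1,2)] gram_square[OF assms(1,2)] assms(3) by simp

theorem strongly_regular_adjacent:
  assumes "a\<^sup>2 \<noteq> b\<^sup>2"
  shows "strongly_regular V adjacent"
proof -
  define k where "k = (c - 1 - (real (card V) - 1) * b\<^sup>2) / (a\<^sup>2 - b\<^sup>2)"
  have degree: "card {v\<in>V. adjacent u v} = k" if "u \<in> V" for u
    using degree_eq[OF that] assms by (simp add: k_def field_simps)
  have "(a - b)\<^sup>2 \<noteq> 0"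
    using assms by auto
  then have common: "card {v\<in>V. adjacent u v \<and> adjacent w v} =
      (c * G u w - 2 * b * (1 - b) - card V * b\<^sup>2 - 2 * (1 - b) * (a - b) * of_bool (G u w = a)
       - 2 * b * (a - b) * k) / (a - b)\<^sup>2"
    if "u \<in> V" "w \<in> V" "u \<noteq> w" for u w
    using common_neighbours_eq[OF that] degree that by (simp add: field_simps)
  show ?thesis
  proof (rule strongly_regularI)
    show "card {w\<in>V. adjacent v w} = k" if "v \<in> V" for v
      using degree that .
    show "card {u\<in>V. adjacent v u \<and> adjacent w u} =
        (c * a - 2 * b * (1 - b) - card V * b\<^sup>2 - 2 * (1 - b) * (a - b) - 2 * b * (a - b) * k)
        / (a - b)\<^sup>2"
      if "v \<in> V" "w \<in> V" "v \<noteq> w" "adjacent v w" for v w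
      using common[OF that(1-3)] that(4) by simp
    show "card {u\<in>V. adjacent v u \<and> adjacent w u} =
        (c * b - 2 * b * (1 - b) - card V * b\<^sup>2 - 2 * b * (a - b) * k) / (a - b)\<^sup>2"
      if "v \<in> V" "w \<in> V" "v \<noteq> w" "\<not> adjacent v w" for v w
      using common[OF that(1-3)] that(3,4) gram_two_valued[OF that(1-3)] assms by auto
  qed
qed

end

lemma two_valued_gram_swap:
  "two_valued_gram V G a b c \<Longrightarrow> two_valued_gram V G b a c"
  unfolding two_valued_gram_def by blast

lemma two_valued_gram_if_two_distance_tight_frame:
  fixes S :: "(real ^ 'n) set"
  assumes "two_distance_tight_frame S a b"
  shows "two_valued_gram S (\<bullet>) a b (card S / CARD('n))"
proof
  show "finite S" "\<And>u v. u \<in> S \<Longrightarrow> v \<in> S \<Longrightarrow> u \<noteq> v \<Longrightarrow> u \<bullet> v = a \<or> u \<bullet> v = b"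
    using assms unfolding two_distance_tight_frame_def by auto
  show "u \<bullet> u = 1" if "u \<in> S" for u
    using assms that unfolding two_distance_tight_frame_def
    by (simp add: power2_norm_eq_inner[symmetric])
  show "u \<bullet> v = v \<bullet> u" for u v :: "real ^ 'n"
    by (rule inner_commute)
  show "(\<Sum>v\<in>S. (u \<bullet> v) * (w \<bullet> v)) = card S / CARD('n) * (u \<bullet> w)" for u w :: "real ^ 'n"
    using assms unfolding two_distance_tight_frame_def by (intro tight_frame_polarization) auto
qed

theorem proposition3p2:
  fixes S :: "(real ^ 'n) set" and a b :: real
  assumes "two_distance_tight_frame S a b"
    and "a\<^sup>2 \<noteq> b\<^sup>2"
  shows "strongly_regular S (\<lambda>x y. x \<noteq> y \<and> x \<bullet> y = a)
       \<and> strongly_regular S (\<lambda>x y. x \<noteq> y \<and> x \<bullet> y = b)"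
proof -
  have gram: "two_valued_gram S (\<bullet>) a b (card S / CARD('n))"
    using assms(1) by (rule two_valued_gram_if_two_distance_tight_frame)
  show ?thesis
    using two_valued_gram.strongly_regular_adjacent[OF gram assms(2)]
      two_valued_gram.strongly_regular_adjacent[OF two_valued_gram_swap[OF gram]] assms(2)
    by auto
qed

end
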